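(* Let $g:\mathbb{R}^N\to\mathbb{R}\cup\{+\infty\}$ be proper and lower semi-continuous, let $f:\mathbb{R}^N\to\mathbb{R}$ be continuously differentiable such that, for some $\mathbf{L}\in\mathbb{S}_{++}(N)$, the gradient of $f\circ\mathbf{L}^{-1/2}$ is $1$-Lipschitz continuous, and assume $f^g:=f+g$ is bounded from below. Fix $a>0$, $x_0\in\mathbb{R}^N$, and a sequence of matrices $\mathbf{D}_k\in\mathbb{R}^{N\times R}$. For $k\ge0$ and $\boldsymbol\beta\in\mathbb{R}^R$ let $y^{(\boldsymbol\beta)}_k:=x_k+\mathbf{D}_k\boldsymbol\beta$ and $\ell(x;y):=g(x)+f(y)+\langle\nabla f(y),x-y\rangle$. Suppose the sequences $(x_k)_{k}$, $(\boldsymbol\beta_k)_k$, and symmetric matrices $(\mathbf{L}_k)_k$, $(\mathbf{T}_k)_k$ satisfy for all $k\ge0$: $$\ell(x_{k+1};y_k^{(\boldsymbol\beta_k)})+\tfrac12\|x_{k+1}-y_k^{(\boldsymbol\beta_k)}\|_{\mathbf{T}_k}^2\le f^g(x_k),$$ $\mathbf{T}_k-\mathbf{L}_k-a\mathbf{I}\in\mathbb{S}_+(N)$, and $$f(x_{k+1})\le f(y_k^{(\boldsymbol\beta_k)})+\langle\nabla f(y_k^{(\boldsymbol\beta_k)}),x_{k+1}-y_k^{(\boldsymbol\beta_k)}\rangle+\tfrac12\|x_{k+1}-y_k^{(\boldsymbol\beta_k)}\|_{\mathbf{L}_k}^2.$$ Suppose $(\mathbf{T}_k)_{k\in\mathbb{N}}$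 is bounded. Then $(f^g(x_k))_{k\in\mathbb{N}}$ is non-increasing. If, additionally, $g$ is continuous on its domain and $\operatorname{dist}(0,\partial f^g(x_{k+1}))\to0$ as $k\to\infty$, then every limit point of $(x_{k+1})_{k\in\mathbb{N}}$ is a stationary point of $f^g$.
   Context: $\mathbb{S}_{+}(N)$ (resp. $\mathbb{S}_{++}(N)$) denotes the set of symmetric positive semi-definite (resp. positive definite) $N\times N$ real matrices; $\mathbf{I}$ is the identity; $\|x\|_{\mathbf{V}}^2:=\langle x,\mathbf{V}x\rangle$. The Fréchet subdifferential $\hat\partial h(\bar x)$ of $h:\mathbb{R}^N\to\mathbb{R}\cup\{+\infty\}$ at $\bar x\in\operatorname{dom}h$ is the set of $v$ with $\liminf_{x\to\bar x,x\ne\bar x}\frac{h(x)-h(\bar x)-\langle v,x-\bar x\rangle}{\|x-\bar x\|}\ge0$; the limiting subdifferential $\partial h(\bar x)$ is the set of $v$ for which there exist $x_k\to\bar x$ with $h(x_k)\to h(\bar x)$ and $v_k\in\hat\partial h(x_k)$ with $v_k\to v$ (both empty outside $\operatorname{dom}h$); $\operatorname{dist}(0,\emptyset):=+\infty$. A stationary point of $h$ is a point $\bar x$ with $0\in\partial h(\bar x)$. *)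

theory Defs
  imports "HOL-Analysis.Analysis" "HOL-Library.Extended_Real"
begin

definition psd_mat :: "real^'n^'n \<Rightarrow> bool" where
  "psd_mat M \<longleftrightarrow> transpose M = M \<and> (\<forall>x. 0 \<le> x \<bullet> (M *v x))"

definition pd_mat :: "real^'n^'n \<Rightarrow> bool" where
  "pd_mat M \<longleftrightarrow> transpose M = M \<and> (\<forall>x. x \<noteq> 0 \<longrightarrow> 0 < x \<bullet> (M *v x))"

definition wnorm2 :: "real^'n^'n \<Rightarrow> real^'n \<Rightarrow> real" where
  "wnorm2 V x = x \<bullet> (V *v x)"

definition inv_sqrt_mat :: "real^'n^'n \<Rightarrow> real^'n^'n" where
  "inv_sqrt_mat L = (THE S. pd_mat S \<and> S ** S = matrix_inv L)"

definition lsc :: "('a::topological_space \<Rightarrow> ereal) \<Rightarrow> bool" where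
  "lsc h \<longleftrightarrow> (\<forall>x. h x \<le> Liminf (at x) h)"

definition proper_fun :: "('a \<Rightarrow> ereal) \<Rightarrow> bool" where
  "proper_fun h \<longleftrightarrow> (\<forall>x. h x \<noteq> -\<infinity>) \<and> (\<exists>x. h x \<noteq> \<infinity>)"

definition edom :: "('a \<Rightarrow> ereal) \<Rightarrow> 'a set" where
  "edom h = {x. h x < \<infinity>}"

definition frechet_subdiff :: "(real^'n \<Rightarrow> ereal) \<Rightarrow> real^'n \<Rightarrow> (real^'n) set" where
  "frechet_subdiff h xb = {v. xb \<in> edom h \<and>
     0 \<le> Liminf (at xb) (\<lambda>x. (h x - h xb - ereal (v \<bullet> (x - xb))) / ereal (norm (x - xb)))}"

definition limiting_subdiff :: "(real^'n \<Rightarrow> ereal) \<Rightarrow> real^'n \<Rightarrow> (real^'n) set" where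
  "limiting_subdiff h xb = {v. xb \<in> edom h \<and>
     (\<exists>xs vs. xs \<longlonglongrightarrow> xb \<and> (\<lambda>k. h (xs k)) \<longlonglongrightarrow> h xb \<and>
        (\<forall>k. vs k \<in> frechet_subdiff h (xs k)) \<and> vs \<longlonglongrightarrow> v)}"

definition dist0 :: "(real^'n) set \<Rightarrow> ereal" where
  "dist0 S = (if S = {} then \<infinity> else ereal (infdist 0 S))"

definition stationary :: "(real^'n \<Rightarrow> ereal) \<Rightarrow> real^'n \<Rightarrow> bool" where
  "stationary h xb \<longleftrightarrow> 0 \<in> limiting_subdiff h xb"

definition limit_point :: "(nat \<Rightarrow> 'a::topological_space) \<Rightarrow> 'a \<Rightarrow> bool" where
  "limit_point s z \<longleftrightarrow> (\<exists>r. strict_mono r \<and> (s \<circ> r) \<longlonglongrightarrow> z)"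

end

(* Because T_k - L_k - aI is positive semidefinite, the T_k-model minimised in the descent
   inequality dominates the L_k-upper bound on f, so f + g cannot increase from x_k to x_{k+1}.
   For stationarity, take a subsequence x_{k+1} -> z. Monotonicity bounds the objective along it,
   so lower semicontinuity of g puts z in dom g, and continuity of g there gives convergence of the
   objective values. Selecting subgradients of norm tending to zero, a diagonal argument over the
   Frechet subgradients defining them shows 0 is in the limiting subdifferential at z. *)

theory Submission
  imports Defs
begin

lemma wnorm2_diff_scaled_identity:
  "wnorm2 (T - L - a *\<^sub>R mat 1) d = wnorm2 T d - wnorm2 L d - a * (d \<bullet> d)"
  unfolding wnorm2_def
  by (simp add: matrix_vector_mult_diff_rdistrib inner_diff_right scaleR_matrix_vector_assoc[symmetric])

lemma wnorm2_le_of_psd_gap: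
  assumes "psd_mat (T - L - a *\<^sub>R mat 1)" and "0 \<le> a"
  shows "wnorm2 L d \<le> wnorm2 T d"
proof -
  have "0 \<le> wnorm2 (T - L - a *\<^sub>R mat 1) d"
    using assms(1) unfolding psd_mat_def wnorm2_def by blast
  moreover have "0 \<le> a * (d \<bullet> d)"
    using assms(2) by simp
  ultimately show ?thesis
    unfolding wnorm2_diff_scaled_identity by linarith
qed

lemma majorized_step_decreases:
  fixes r m :: real and gx' c :: ereal
  assumes model: "gx' + ereal (m + 1/2 * wnorm2 T d) \<le> c"
    and upper: "r \<le> m + 1/2 * wnorm2 L d"
    and gap: "psd_mat (T - L - a *\<^sub>R mat 1)" and "0 \<le> a"
  shows "ereal r + gx' \<le> c"
proof -
  have "r \<le> m + 1/2 * wnorm2 T d"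
    using upper wnorm2_le_of_psd_gap[OF gap \<open>0 \<le> a\<close>, of d] by linarith
  then have "ereal r + gx' \<le> ereal (m + 1/2 * wnorm2 T d) + gx'"
    by (intro add_right_mono) simp
  also have "\<dots> \<le> c"
    using model by (simp add: add.commute)
  finally show ?thesis .
qed

lemma lsc_le_of_eventually_le:
  fixes g :: "'a::topological_space \<Rightarrow> ereal"
  assumes "lsc g" and "p \<longlonglongrightarrow> z" and "eventually (\<lambda>k. g (p k) \<le> B) sequentially"
  shows "g z \<le> B"
proof (rule ccontr)
  assume "\<not> g z \<le> B"
  then have B: "B < g z" by simp
  with \<open>lsc g\<close> have "eventually (\<lambda>u. B < g u) (at z)"
    unfolding lsc_def le_Liminf_iff by (meson order_less_le_trans)
  then have "eventually (\<lambda>u. B < g u) (nhds z)"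
    using B unfolding eventually_at_filter by (auto elim: eventually_mono)
  then have "eventually (\<lambda>k. B < g (p k)) sequentially"
    using \<open>p \<longlonglongrightarrow> z\<close> by (rule eventually_compose_filterlim)
  with assms(3) have "eventually (\<lambda>k. False) sequentially"
    by eventually_elim auto
  then show False by simp
qed

lemma infdist_lessE:
  assumes "A \<noteq> {}" and "infdist x A < e"
  obtains a where "a \<in> A" and "dist x a < e"
proof -
  have "bdd_below (dist x ` A)"
    by (rule bdd_belowI[of _ 0]) auto
  then show ?thesis
    using assms that by (auto simp: infdist_notempty cINF_less_iff)
qed

lemma LIMSEQ_of_dist_lt_inverse_Suc:
  fixes q p :: "nat \<Rightarrow> 'a::real_normed_vector"
  assumes "\<forall>k. dist (q k) (p k) < inverse (real (Suc k))" and "p \<longlonglongrightarrow> z"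
  shows "q \<longlonglongrightarrow> z"
proof (rule Lim_transform[OF \<open>p \<longlonglongrightarrow> z\<close>])
  show "(\<lambda>k. q k - p k) \<longlonglongrightarrow> 0"
    using assms(1) by (intro Lim_null_comparison[OF _ LIMSEQ_inverse_real_of_nat])
      (auto simp: dist_norm less_imp_le)
qed

lemma dist0_tendsto_zero_obtains_selection:
  fixes S :: "nat \<Rightarrow> (real^'n) set"
  assumes "(\<lambda>k. dist0 (S k)) \<longlonglongrightarrow> 0"
  obtains v where "eventually (\<lambda>k. v k \<in> S k) sequentially" and "v \<longlonglongrightarrow> 0"
proof -
  have "eventually (\<lambda>k. dist0 (S k) < 1) sequentially"
    using order_tendstoD(2)[OF assms] by simp
  then have nonempty: "eventually (\<lambda>k. S k \<noteq> {}) sequentially"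
    by eventually_elim (auto simp: dist0_def)
  then have "eventually (\<lambda>k. ereal (infdist 0 (S k)) = dist0 (S k)) sequentially"
    by eventually_elim (simp add: dist0_def)
  then have "(\<lambda>k. ereal (infdist 0 (S k))) \<longlonglongrightarrow> ereal 0"
    by (subst tendsto_cong) (use assms in \<open>simp_all only: zero_ereal_def\<close>)
  then have infdist_0: "(\<lambda>k. infdist 0 (S k)) \<longlonglongrightarrow> 0"
    by (simp only: lim_ereal)
  define e where "e k = infdist 0 (S k) + inverse (real (Suc k))" for k
  define v where "v k = (SOME u. u \<in> S k \<and> norm u < e k)" for k
  have v: "eventually (\<lambda>k. v k \<in> S k \<and> norm (v k) < e k) sequentially"
    using nonempty
  proof eventually_elim
    case (elim k)
    have "infdist 0 (S k) < e k" by (simp add: e_def)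
    with elim obtain u where "u \<in> S k" "dist 0 u < e k" by (rule infdist_lessE)
    then have "\<exists>u. u \<in> S k \<and> norm u < e k" by auto
    then show ?case unfolding v_def by (rule someI_ex)
  qed
  have "e \<longlonglongrightarrow> 0"
    using tendsto_add[OF infdist_0 LIMSEQ_inverse_real_of_nat] unfolding e_def by simp
  then have "v \<longlonglongrightarrow> 0"
    by (rule Lim_null_comparison[rotated]) (use v in \<open>auto elim: eventually_mono\<close>)
  moreover from v have "eventually (\<lambda>k. v k \<in> S k) sequentially"
    by (rule eventually_mono) blast
  ultimately show ?thesis
    using that by blast
qed

lemma limiting_subdiff_frechet_approx:
  assumes "\<forall>x. h x \<noteq> -\<infinity>" and "v \<in> limiting_subdiff h p" and "0 < e"
  obtains q w where "w \<in> frechet_subdiff h q" and "dist q p < e" and "dist w v < e"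
    and "dist (real_of_ereal (h q)) (real_of_ereal (h p)) < e"
proof -
  obtain xs vs where "p \<in> edom h" and xs: "xs \<longlonglongrightarrow> p" and hxs: "(\<lambda>j. h (xs j)) \<longlonglongrightarrow> h p"
    and frechet: "\<forall>j. vs j \<in> frechet_subdiff h (xs j)" and vs: "vs \<longlonglongrightarrow> v"
    using assms(2) unfolding limiting_subdiff_def by blast
  then have "h p = ereal (real_of_ereal (h p))"
    using assms(1) unfolding edom_def by (cases "h p") auto
  with hxs have "(\<lambda>j. real_of_ereal (h (xs j))) \<longlonglongrightarrow> real_of_ereal (h p)"
    by (metis lim_real_of_ereal)
  with xs vs \<open>0 < e\<close> have "eventually (\<lambda>j. dist (xs j) p < e \<and> dist (vs j) v < e
      \<and> dist (real_of_ereal (h (xs j))) (real_of_ereal (h p)) < e) sequentially"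
    unfolding tendsto_iff by (intro eventually_conj) blast+
  then obtain j where "dist (xs j) p < e" "dist (vs j) v < e"
      "dist (real_of_ereal (h (xs j))) (real_of_ereal (h p)) < e"
    unfolding eventually_sequentially by blast
  with frechet show ?thesis by (intro that) auto
qed

lemma limiting_subdiff_closed:
  assumes h: "\<forall>x. h x \<noteq> -\<infinity>" and p: "p \<longlonglongrightarrow> z" and hp: "(\<lambda>k. h (p k)) \<longlonglongrightarrow> h z"
    and z: "z \<in> edom h" and v: "\<forall>k. v k \<in> limiting_subdiff h (p k)" and "v \<longlonglongrightarrow> w"
  shows "w \<in> limiting_subdiff h z"
proof -
  have "\<exists>q u. u \<in> frechet_subdiff h q \<and> dist q (p k) < inverse (real (Suc k))
      \<and> dist u (v k) < inverse (real (Suc k))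
      \<and> dist (real_of_ereal (h q)) (real_of_ereal (h (p k))) < inverse (real (Suc k))" for k
    by (rule limiting_subdiff_frechet_approx[OF h v[rule_format, of k]]) auto
  then obtain Q W where frechet: "\<forall>k. W k \<in> frechet_subdiff h (Q k)"
    and Q: "\<forall>k. dist (Q k) (p k) < inverse (real (Suc k))"
    and W: "\<forall>k. dist (W k) (v k) < inverse (real (Suc k))"
    and hQ: "\<forall>k. dist (real_of_ereal (h (Q k))) (real_of_ereal (h (p k))) < inverse (real (Suc k))"
    by metis
  have finite: "h y = ereal (real_of_ereal (h y))" if "y \<in> edom h" for y
    using that h unfolding edom_def by (cases "h y") auto
  from z hp have "(\<lambda>k. real_of_ereal (h (p k))) \<longlonglongrightarrow> real_of_ereal (h z)"
    by (metis finite lim_real_of_ereal)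
  with hQ have "(\<lambda>k. real_of_ereal (h (Q k))) \<longlonglongrightarrow> real_of_ereal (h z)"
    by (rule LIMSEQ_of_dist_lt_inverse_Suc)
  then have "(\<lambda>k. ereal (real_of_ereal (h (Q k)))) \<longlonglongrightarrow> h z"
    by (subst finite[OF z]) (simp only: lim_ereal)
  moreover have "h (Q k) = ereal (real_of_ereal (h (Q k)))" for k
    using frechet finite unfolding frechet_subdiff_def by blast
  ultimately have "(\<lambda>k. h (Q k)) \<longlonglongrightarrow> h z"
    by simp
  moreover have "Q \<longlonglongrightarrow> z" and "W \<longlonglongrightarrow> w"
    using LIMSEQ_of_dist_lt_inverse_Suc Q W p \<open>v \<longlonglongrightarrow> w\<close> by blast+
  ultimately show ?thesis
    using z frechet unfolding limiting_subdiff_def by blast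
qed

lemma stationary_of_dist0_subdiff_tendsto_zero:
  assumes h: "\<forall>x. h x \<noteq> -\<infinity>" and p: "p \<longlonglongrightarrow> z" and hp: "(\<lambda>k. h (p k)) \<longlonglongrightarrow> h z"
    and z: "z \<in> edom h" and "(\<lambda>k. dist0 (limiting_subdiff h (p k))) \<longlonglongrightarrow> 0"
  shows "stationary h z"
proof -
  obtain v where "eventually (\<lambda>k. v k \<in> limiting_subdiff h (p k)) sequentially" and "v \<longlonglongrightarrow> 0"
    by (rule dist0_tendsto_zero_obtains_selection[OF assms(5)])
  then obtain N where "\<forall>k. v (k + N) \<in> limiting_subdiff h (p (k + N))"
    unfolding eventually_sequentially by (metis le_add2)
  moreover have "(\<lambda>k. v (k + N)) \<longlonglongrightarrow> 0" and "(\<lambda>k. p (k + N)) \<longlonglongrightarrow> z"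
      and "(\<lambda>k. h (p (k + N))) \<longlonglongrightarrow> h z"
    using LIMSEQ_ignore_initial_segment \<open>v \<longlonglongrightarrow> 0\<close> p hp by blast+
  ultimately show ?thesis
    unfolding stationary_def by (intro limiting_subdiff_closed[OF h _ _ z]) auto
qed

lemma edom_add_real: "edom (\<lambda>z. ereal (f z) + g z) = edom g"
  unfolding edom_def by (auto simp: plus_ereal.simps less_ereal.simps split: ereal.splits)

lemma lsc_limit_in_edom:
  fixes f :: "'a::topological_space \<Rightarrow> real" and g :: "'a \<Rightarrow> ereal"
  assumes "lsc g" and "continuous_on UNIV f" and p: "p \<longlonglongrightarrow> z"
    and bound: "eventually (\<lambda>k. ereal (f (p k)) + g (p k) \<le> ereal M) sequentially"
  shows "z \<in> edom g"
proof -
  have "(\<lambda>k. f (p k)) \<longlonglongrightarrow> f z"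
    using continuous_on_tendsto_compose[OF assms(2) p] by simp
  then have "eventually (\<lambda>k. f z - 1 < f (p k)) sequentially"
    by (rule order_tendstoD) simp
  with bound have "eventually (\<lambda>k. g (p k) \<le> ereal (M - f z + 1)) sequentially"
  proof eventually_elim
    case (elim k)
    then show ?case by (cases "g (p k)") auto
  qed
  then have "g z \<le> ereal (M - f z + 1)"
    by (rule lsc_le_of_eventually_le[OF \<open>lsc g\<close> p])
  then show ?thesis
    unfolding edom_def by auto
qed

lemma limit_point_stationary_of_decseq:
  fixes f :: "real^'n \<Rightarrow> real" and g :: "real^'n \<Rightarrow> ereal"
  assumes g: "\<forall>y. g y \<noteq> -\<infinity>" and "lsc g" and g_cont: "continuous_on (edom g) g"
    and f_cont: "continuous_on UNIV f"
    and dec: "decseq (\<lambda>k. ereal (f (x k)) + g (x k))"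
    and subdiff: "(\<lambda>k. dist0 (limiting_subdiff (\<lambda>y. ereal (f y) + g y) (x k))) \<longlonglongrightarrow> 0"
    and "limit_point x z"
  shows "stationary (\<lambda>y. ereal (f y) + g y) z"
proof -
  let ?F = "\<lambda>y. ereal (f y) + g y"
  obtain r where r: "strict_mono r" and "(x \<circ> r) \<longlonglongrightarrow> z"
    using \<open>limit_point x z\<close> unfolding limit_point_def by blast
  define p where "p = x \<circ> r"
  have p: "p \<longlonglongrightarrow> z"
    unfolding p_def by fact
  have subdiff_p: "(\<lambda>k. dist0 (limiting_subdiff ?F (p k))) \<longlonglongrightarrow> 0"
    using LIMSEQ_subseq_LIMSEQ[OF subdiff r] by (simp add: p_def comp_def)
  have "eventually (\<lambda>k. dist0 (limiting_subdiff ?F (p k)) < \<infinity>) sequentially"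
    by (rule order_tendstoD(2)[OF subdiff_p]) simp
  then have dom: "eventually (\<lambda>k. p k \<in> edom g) sequentially"
  proof eventually_elim
    case (elim k)
    then have "limiting_subdiff ?F (p k) \<noteq> {}"
      by (auto simp: dist0_def)
    then show ?case
      unfolding limiting_subdiff_def edom_add_real by blast
  qed
  then obtain N where "p N \<in> edom g"
    unfolding eventually_sequentially by blast
  then obtain M where M: "?F (p N) = ereal M"
    using g unfolding edom_def by (cases "g (p N)") auto
  have "?F (p k) \<le> ereal M" if "N \<le> k" for k
  proof -
    have "r N \<le> r k"
      using strict_mono_less_eq[OF r] that by simp
    then show ?thesis
      using decseqD[OF dec \<open>r N \<le> r k\<close>] M by (simp add: p_def)
  qed
  then have "eventually (\<lambda>k. ?F (p k) \<le> ereal M) sequentially"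
    unfolding eventually_sequentially by blast
  with \<open>lsc g\<close> f_cont p have z: "z \<in> edom g"
    by (rule lsc_limit_in_edom)
  have "(\<lambda>k. g (p k)) \<longlonglongrightarrow> g z"
    by (rule continuous_on_tendsto_compose[OF g_cont p z dom])
  moreover have "(\<lambda>k. f (p k)) \<longlonglongrightarrow> f z"
    using continuous_on_tendsto_compose[OF f_cont p] by simp
  ultimately have "(\<lambda>k. ?F (p k)) \<longlonglongrightarrow> ?F z"
    using z g by (intro tendsto_add_ereal) (auto simp: edom_def)
  with p subdiff_p z g show ?thesis
    by (intro stationary_of_dist0_subdiff_tendsto_zero) (auto simp: edom_add_real)
qed

theorem mainTheorem4:
  fixes g :: "real^'n \<Rightarrow> ereal"
    and f :: "real^'n \<Rightarrow> real"
    and gradf :: "real^'n \<Rightarrow> real^'n"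
    and L :: "real^'n^'n"
    and a :: real
    and x0 :: "real^'n"
    and D :: "nat \<Rightarrow> real^'r^'n"
    and x :: "nat \<Rightarrow> real^'n"
    and \<beta> :: "nat \<Rightarrow> real^'r"
    and Lk Tk :: "nat \<Rightarrow> real^'n^'n"
  assumes g_proper: "proper_fun g"
    and g_lsc: "lsc g"
    and f_grad: "\<forall>z. (f has_derivative (\<lambda>h. gradf z \<bullet> h)) (at z)"
    and f_C1: "continuous_on UNIV gradf"
    and L_pd: "pd_mat L"
    and L_lip: "\<exists>G. (\<forall>z. ((\<lambda>u. f (inv_sqrt_mat L *v u)) has_derivative (\<lambda>h. G z \<bullet> h)) (at z))
                    \<and> lipschitz_on 1 UNIV G"
    and fg_bdd: "\<exists>c. \<forall>z. ereal c \<le> ereal (f z) + g z"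
    and a_pos: "a > 0"
    and x_init: "x 0 = x0"
    and Lk_sym: "\<forall>k. transpose (Lk k) = Lk k"
    and Tk_sym: "\<forall>k. transpose (Tk k) = Tk k"
    and descent: "\<forall>k. let y = x k + D k *v \<beta> k in
        g (x (Suc k)) + ereal (f y + gradf y \<bullet> (x (Suc k) - y)
          + 1/2 * wnorm2 (Tk k) (x (Suc k) - y)) \<le> ereal (f (x k)) + g (x k)"
    and T_L: "\<forall>k. psd_mat (Tk k - Lk k - a *\<^sub>R mat 1)"
    and local_lip: "\<forall>k. let y = x k + D k *v \<beta> k in
        f (x (Suc k)) \<le> f y + gradf y \<bullet> (x (Suc k) - y) + 1/2 * wnorm2 (Lk k) (x (Suc k) - y)"
    and T_bdd: "bounded (range Tk)"
  shows "antimono (\<lambda>k. ereal (f (x k)) + g (x k))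
    \<and> ((continuous_on (edom g) g
         \<and> (\<lambda>k. dist0 (limiting_subdiff (\<lambda>z. ereal (f z) + g z) (x (Suc k)))) \<longlonglongrightarrow> 0)
       \<longrightarrow> (\<forall>z. limit_point (\<lambda>k. x (Suc k)) z \<longrightarrow> stationary (\<lambda>z. ereal (f z) + g z) z))"
proof -
  let ?F = "\<lambda>z. ereal (f z) + g z"
  have "?F (x (Suc k)) \<le> ?F (x k)" for k
    using descent local_lip T_L a_pos
    by (intro majorized_step_decreases[where L = "Lk k"]) (auto simp: Let_def)
  then have decreasing: "antimono (\<lambda>k. ?F (x k))"
    unfolding decseq_Suc_iff by blast
  have "stationary ?F z"
    if "continuous_on (edom g) g" and "(\<lambda>k. dist0 (limiting_subdiff ?F (x (Suc k)))) \<longlonglongrightarrow> 0"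
      and "limit_point (\<lambda>k. x (Suc k)) z" for z
  proof (rule limit_point_stationary_of_decseq[OF _ g_lsc that(1) _ _ that(2,3)])
    show "\<forall>y. g y \<noteq> -\<infinity>"
      using g_proper unfolding proper_fun_def by blast
    show "continuous_on UNIV f"
      using f_grad by (meson continuous_at_imp_continuous_on has_derivative_continuous)
    show "decseq (\<lambda>k. ?F (x (Suc k)))"
      using decreasing by (simp add: decseq_def)
  qed
  with decreasing show ?thesis
    by blast
qed

end
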